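(* Let $\mathsf{M}$ be the subspace of $\ell_1$ with underlying set $\{x \in \prod_{i\in\mathbb{N}} M_i : \sum_{i} |x(i)| < \infty\}$, where $M_i = \{ j\cdot 2^{-i} \mid j \in \{0,\dots,2^i\}\}$. Let $(x_n)_n$ be a sequence in $\mathsf{M}$ and $x_\infty\in\mathsf{M}$. Then $(x_n)_n$ converges in $\mathsf{M}$ to $x_\infty$ if and only if both of the following hold: (a) for every $i\in\mathbb{N}$ there is $n_i\in\mathbb{N}$ with $x_n(i)=x_\infty(i)$ for all $n\ge n_i$; (b) the sequence $(\|x_n\|_1)_n$ converges to $\|x_\infty\|_1$ in $\mathbb{R}$.
   Context: $\ell_1$ is the set of real sequences $x$ with $\|x\|_1=\sum_{i}|x(i)|<\infty$, topologised by the metric $\|x-y\|_1$; $\mathsf{M}$ carries the subspace topology. *)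

theory Defs
  imports "HOL-Analysis.Analysis"
begin

definition grid :: "nat \<Rightarrow> real set" where
  "grid i = {real j / 2 ^ i | j. j \<le> 2 ^ i}"

definition l1_norm :: "(nat \<Rightarrow> real) \<Rightarrow> real" where
  "l1_norm x = (\<Sum>i. \<bar>x i\<bar>)"

definition Mspace :: "(nat \<Rightarrow> real) set" where
  "Mspace = {x. (\<forall>i. x i \<in> grid i) \<and> summable (\<lambda>i. \<bar>x i\<bar>)}"

text \<open>Convergence in l1 (and hence in the subspace M, whose topology is induced
  by the restricted metric): the l1 distance tends to zero.\<close>
definition l1_converges :: "(nat \<Rightarrow> nat \<Rightarrow> real) \<Rightarrow> (nat \<Rightarrow> real) \<Rightarrow> bool" where
  "l1_converges xs y \<longleftrightarrow> (\<lambda>n. l1_norm (\<lambda>i. xs n i - y i)) \<longlonglongrightarrow> 0"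

end

theory Submission
  imports Defs
begin

text \<open>In \<open>\<ell>\<^sub>1\<close>, convergence is equivalent to coordinatewise convergence together with
  convergence of the norms: outside a finite initial segment the distance \<open>\<parallel>x\<^sub>n - y\<parallel>\<^sub>1\<close> is at
  most the sum of the two tails, and the tail of \<open>x\<^sub>n\<close> is the norm of \<open>x\<^sub>n\<close> minus finitely
  many coordinates, hence converges to the tail of \<open>y\<close>, which is small for a long segment.
  In \<open>M\<close> every coordinate ranges over a finite grid with mesh \<open>2\<^sup>-\<^sup>i\<close>, so coordinatewise
  convergence there means that each coordinate is eventually constant.\<close>

lemma summable_abs_diff:
  fixes a b :: "nat \<Rightarrow> real"
  assumes "summable (\<lambda>i. \<bar>a i\<bar>)" "summable (\<lambda>i. \<bar>b i\<bar>)"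
  shows "summable (\<lambda>i. \<bar>a i - b i\<bar>)"
  by (rule summable_comparison_test[OF _ summable_add[OF assms]]) auto

lemma abs_le_l1_norm:
  fixes a :: "nat \<Rightarrow> real"
  assumes "summable (\<lambda>i. \<bar>a i\<bar>)"
  shows "\<bar>a i\<bar> \<le> l1_norm a"
  using sum_le_suminf[OF assms, of "{i}"] by (simp add: l1_norm_def)

lemma l1_norm_diff_le:
  fixes a b :: "nat \<Rightarrow> real"
  assumes "summable (\<lambda>i. \<bar>a i\<bar>)" "summable (\<lambda>i. \<bar>b i\<bar>)"
  shows "l1_norm a \<le> l1_norm (\<lambda>i. a i - b i) + l1_norm b"
proof -
  have "(\<Sum>i. \<bar>a i\<bar>) \<le> (\<Sum>i. \<bar>a i - b i\<bar> + \<bar>b i\<bar>)"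
    by (rule suminf_le) (auto intro!: summable_add summable_abs_diff assms)
  also have "\<dots> = (\<Sum>i. \<bar>a i - b i\<bar>) + (\<Sum>i. \<bar>b i\<bar>)"
    by (rule suminf_add[symmetric]) (auto intro: summable_abs_diff assms)
  finally show ?thesis by (simp add: l1_norm_def)
qed

lemma abs_l1_norm_diff_le:
  fixes a b :: "nat \<Rightarrow> real"
  assumes "summable (\<lambda>i. \<bar>a i\<bar>)" "summable (\<lambda>i. \<bar>b i\<bar>)"
  shows "\<bar>l1_norm a - l1_norm b\<bar> \<le> l1_norm (\<lambda>i. a i - b i)"
proof -
  have "l1_norm (\<lambda>i. b i - a i) = l1_norm (\<lambda>i. a i - b i)"
    by (simp add: l1_norm_def abs_minus_commute)
  then show ?thesis
    using l1_norm_diff_le[OF assms] l1_norm_diff_le[OF assms(2,1)] by linarith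
qed

lemma l1_norm_diff_le_initial_segment:
  fixes a b :: "nat \<Rightarrow> real"
  assumes a: "summable (\<lambda>i. \<bar>a i\<bar>)" and b: "summable (\<lambda>i. \<bar>b i\<bar>)"
  shows "l1_norm (\<lambda>i. a i - b i) \<le> (\<Sum>i<N. \<bar>a i - b i\<bar>)
           + (l1_norm a - (\<Sum>i<N. \<bar>a i\<bar>)) + (l1_norm b - (\<Sum>i<N. \<bar>b i\<bar>))"
proof -
  have a': "summable (\<lambda>i. \<bar>a (i + N)\<bar>)" and b': "summable (\<lambda>i. \<bar>b (i + N)\<bar>)"
    using a b summable_iff_shift[where f = "\<lambda>i. \<bar>a i\<bar>"]
      summable_iff_shift[where f = "\<lambda>i. \<bar>b i\<bar>"] by simp_all
  have ab: "summable (\<lambda>i. \<bar>a i - b i\<bar>)" by (rule summable_abs_diff[OF a b])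
  then have ab': "summable (\<lambda>i. \<bar>a (i + N) - b (i + N)\<bar>)"
    by (simp add: summable_iff_shift[where f = "\<lambda>i. \<bar>a i - b i\<bar>"])
  have "(\<Sum>i. \<bar>a (i + N) - b (i + N)\<bar>) \<le> (\<Sum>i. \<bar>a (i + N)\<bar> + \<bar>b (i + N)\<bar>)"
    by (rule suminf_le[OF _ ab' summable_add[OF a' b']]) simp
  also have "\<dots> = (\<Sum>i. \<bar>a (i + N)\<bar>) + (\<Sum>i. \<bar>b (i + N)\<bar>)"
    by (rule suminf_add[OF a' b', symmetric])
  finally show ?thesis
    using suminf_split_initial_segment[OF ab, of N] suminf_split_initial_segment[OF a, of N]
      suminf_split_initial_segment[OF b, of N]
    by (simp add: l1_norm_def)
qed

lemma l1_converges_iff_pointwise_and_norm: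
  fixes xs :: "nat \<Rightarrow> nat \<Rightarrow> real" and y :: "nat \<Rightarrow> real"
  assumes xs: "\<And>n. summable (\<lambda>i. \<bar>xs n i\<bar>)" and y: "summable (\<lambda>i. \<bar>y i\<bar>)"
  shows "l1_converges xs y \<longleftrightarrow>
    (\<forall>i. (\<lambda>n. xs n i) \<longlonglongrightarrow> y i) \<and> (\<lambda>n. l1_norm (xs n)) \<longlonglongrightarrow> l1_norm y"
proof -
  define d where "d n = l1_norm (\<lambda>i. xs n i - y i)" for n
  have d_nonneg: "0 \<le> d n" for n
    unfolding d_def l1_norm_def by (rule suminf_nonneg[OF summable_abs_diff[OF xs y]]) simp
  have "(\<forall>i. (\<lambda>n. xs n i) \<longlonglongrightarrow> y i) \<and> (\<lambda>n. l1_norm (xs n)) \<longlonglongrightarrow> l1_norm y"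
    if d0: "d \<longlonglongrightarrow> 0"
  proof (intro conjI allI)
    fix i
    have "(\<lambda>n. xs n i - y i) \<longlonglongrightarrow> 0"
      using abs_le_l1_norm[OF summable_abs_diff[OF xs y], of _ i]
      by (intro Lim_null_comparison[OF _ d0]) (simp add: d_def)
    then show "(\<lambda>n. xs n i) \<longlonglongrightarrow> y i" by (rule LIM_zero_cancel)
  next
    have "(\<lambda>n. l1_norm (xs n) - l1_norm y) \<longlonglongrightarrow> 0"
      using abs_l1_norm_diff_le[OF xs y]
      by (intro Lim_null_comparison[OF _ d0]) (simp add: d_def)
    then show "(\<lambda>n. l1_norm (xs n)) \<longlonglongrightarrow> l1_norm y" by (rule LIM_zero_cancel)
  qed
  moreover have "d \<longlonglongrightarrow> 0"
    if pointwise: "\<forall>i. (\<lambda>n. xs n i) \<longlonglongrightarrow> y i"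
      and norms: "(\<lambda>n. l1_norm (xs n)) \<longlonglongrightarrow> l1_norm y"
  proof (rule order_tendstoI)
    fix e :: real assume "0 < e"
    define tail where "tail N = l1_norm y - (\<Sum>i<N. \<bar>y i\<bar>)" for N
    have "tail \<longlonglongrightarrow> l1_norm y - l1_norm y"
      unfolding tail_def l1_norm_def by (intro tendsto_intros summable_LIMSEQ y)
    then have "eventually (\<lambda>N. tail N < e / 2) sequentially"
      using \<open>0 < e\<close> by (intro order_tendstoD(2)) auto
    then obtain N where N: "tail N < e / 2"
      by (auto simp: eventually_sequentially)
    have "(\<lambda>n. (\<Sum>i<N. \<bar>xs n i - y i\<bar>) + (l1_norm (xs n) - (\<Sum>i<N. \<bar>xs n i\<bar>)) + tail N)
            \<longlonglongrightarrow> (\<Sum>i<N. \<bar>y i - y i\<bar>) + (l1_norm y - (\<Sum>i<N. \<bar>y i\<bar>)) + tail N"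
      using pointwise by (intro tendsto_intros norms) auto
    moreover have "(\<Sum>i<N. \<bar>y i - y i\<bar>) + (l1_norm y - (\<Sum>i<N. \<bar>y i\<bar>)) + tail N < e"
      using N by (simp add: tail_def)
    ultimately have "eventually (\<lambda>n. (\<Sum>i<N. \<bar>xs n i - y i\<bar>)
                 + (l1_norm (xs n) - (\<Sum>i<N. \<bar>xs n i\<bar>)) + tail N < e) sequentially"
      by (rule order_tendstoD(2))
    then show "eventually (\<lambda>n. d n < e) sequentially"
    proof eventually_elim
      case (elim n)
      then show ?case
        using l1_norm_diff_le_initial_segment[OF xs y, of n N] by (simp add: d_def tail_def)
    qed
  next
    fix e :: real assume "e < 0"
    then show "eventually (\<lambda>n. e < d n) sequentially"
      using d_nonneg by (simp add: less_le_trans)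
  qed
  ultimately show ?thesis
    unfolding l1_converges_def d_def[abs_def] by blast
qed

lemma grid_eq_if_dist_less:
  assumes "a \<in> grid i" "b \<in> grid i" "dist a b < 1 / 2 ^ i"
  shows "a = b"
proof -
  obtain j k :: nat where a: "a = real j / 2 ^ i" and b: "b = real k / 2 ^ i"
    using assms(1,2) unfolding grid_def by auto
  have "\<bar>real j - real k\<bar> / 2 ^ i < 1 / 2 ^ i"
    using assms(3) by (simp add: a b dist_real_def diff_divide_distrib[symmetric])
  then have "\<bar>real j - real k\<bar> < 1" by (simp add: divide_less_cancel)
  then show ?thesis using a b by simp
qed

lemma grid_tendsto_iff_eventually_eq:
  assumes "\<And>n. f n \<in> grid i" "c \<in> grid i"
  shows "f \<longlonglongrightarrow> c \<longleftrightarrow> (\<exists>m. \<forall>n\<ge>m. f n = c)"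
proof
  assume "f \<longlonglongrightarrow> c"
  then have "eventually (\<lambda>n. dist (f n) c < 1 / 2 ^ i) sequentially"
    by (simp add: tendsto_iff)
  then show "\<exists>m. \<forall>n\<ge>m. f n = c"
    using grid_eq_if_dist_less[OF assms(1) assms(2)] by (auto simp: eventually_sequentially)
next
  assume "\<exists>m. \<forall>n\<ge>m. f n = c"
  then show "f \<longlonglongrightarrow> c"
    by (intro tendsto_eventually) (auto simp: eventually_sequentially)
qed

theorem lemma3p1:
  fixes xs :: "nat \<Rightarrow> nat \<Rightarrow> real" and xinf :: "nat \<Rightarrow> real"
  assumes "\<And>n. xs n \<in> Mspace" and "xinf \<in> Mspace"
  shows "l1_converges xs xinf \<longleftrightarrow>
    ((\<forall>i. \<exists>ni. \<forall>n\<ge>ni. xs n i = xinf i) \<and>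
     (\<lambda>n. l1_norm (xs n)) \<longlonglongrightarrow> l1_norm xinf)"
proof -
  have "(\<lambda>n. xs n i) \<longlonglongrightarrow> xinf i \<longleftrightarrow> (\<exists>ni. \<forall>n\<ge>ni. xs n i = xinf i)" for i
    using assms by (intro grid_tendsto_iff_eventually_eq) (auto simp: Mspace_def)
  moreover have "l1_converges xs xinf \<longleftrightarrow>
      (\<forall>i. (\<lambda>n. xs n i) \<longlonglongrightarrow> xinf i) \<and> (\<lambda>n. l1_norm (xs n)) \<longlonglongrightarrow> l1_norm xinf"
    using assms by (intro l1_converges_iff_pointwise_and_norm) (auto simp: Mspace_def)
  ultimately show ?thesis by simp
qed

end
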